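(* Let $G=(V,E)$ be a connected undirected unweighted graph in which every node has a self-loop. Then the set function $S\mapsto\operatorname{fp}^{\infty}(G^S)$ on subsets of $V$ is submodular.
   Context: Positional Voter model. A graph $G=(V,E,w)$ has node set $V$ with $|V|=n$, edge set $E\subseteq V\times V$ and weights $w\colon E\to\mathbb{R}_{>0}$; $\operatorname{in}(u)=\{v\in V:(v,u)\in E\}$. "Undirected unweighted" means $E$ is symmetric and $w\equiv 1$; "self-loop at $u$" means $(u,u)\in E$. A configuration is a set $X\subseteq V$ (the nodes carrying the novel trait $A$). Given a biased set $S\subseteq V$ and bias $\delta\ge 0$, define $f^S_X(v\mid u)=1+\delta$ if $v\in X$ and $u\in S$, and $1$ otherwise. The process $(\mathcal{X}_t)_{t\ge0}$: given $\mathcal{X}_t=X$, a node $u$ is chosen uniformly at random from $V$, then $v\in\operatorname{in}(u)$ is chosen with probability $\frac{f^S_X(v\mid u)\,w(v,u)}{\sum_{x\in\operatorname{in}(u)} f^S_X(x\mid u)\,w(x,u)}$, and $\mathcal{X}_{t+1}=X\cup\{u\}$ if $v\in X$, $\mathcal{X}_{t+1}=X\setminus\{u\}$ otherwise. Define $\operatorname{fp}(G^S,\delta,X)=\mathbb{P}[\exists t\ge0:\mathcal{X}_t=V\mid\mathcal{X}_0=X]$, $\operatorname{fp}(G^S,\delta)=\frac1n\sum_{u\in V}\operatorname{fp}(G^S,\delta,\{u\})$, and $\operatorname{fp}^{\infty}(G^S)=\lim_{\delta\to\infty}\operatorname{fp}(G^S,\delta)$. A set function $f$ on subsets of $V$ is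 submodular if $f(S_1)+f(S_2)\ge f(S_1\cup S_2)+f(S_1\cap S_2)$ for all $S_1,S_2\subseteq V$. *)

theory Defs
  imports "HOL-Analysis.Analysis"
begin

definition in_nbrs :: "('a \<times> 'a) set \<Rightarrow> 'a \<Rightarrow> 'a set" where
  "in_nbrs E u = {v. (v, u) \<in> E}"

definition fbias :: "'a set \<Rightarrow> real \<Rightarrow> 'a set \<Rightarrow> 'a \<Rightarrow> 'a \<Rightarrow> real" where
  "fbias S \<delta> X v u = (if v \<in> X \<and> u \<in> S then 1 + \<delta> else 1)"

text \<open>Expected value of h at the next configuration, given the current configuration X:
  u uniform on V, then v \<in> in(u) with probability proportional to f^S_X(v|u) w(v,u);
  the new configuration is X \<union> {u} if v \<in> X and X - {u} otherwise.\<close>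
definition step_exp ::
  "'a set \<Rightarrow> ('a \<times> 'a) set \<Rightarrow> ('a \<times> 'a \<Rightarrow> real) \<Rightarrow> 'a set \<Rightarrow> real \<Rightarrow> 'a set
     \<Rightarrow> ('a set \<Rightarrow> real) \<Rightarrow> real" where
  "step_exp V E w S \<delta> X h =
     (\<Sum>u\<in>V. (1 / real (card V)) *
        (\<Sum>v\<in>in_nbrs E u.
           (fbias S \<delta> X v u * w (v, u) / (\<Sum>x\<in>in_nbrs E u. fbias S \<delta> X x u * w (x, u)))
           * h (if v \<in> X then insert u X else X - {u})))"

text \<open>hit_within N X = P[\<exists>t \<le> N. X_t = V | X_0 = X].\<close>
fun hit_within ::
  "'a set \<Rightarrow> ('a \<times> 'a) set \<Rightarrow> ('a \<times> 'a \<Rightarrow> real) \<Rightarrow> 'a set \<Rightarrow> real \<Rightarrow> nat \<Rightarrow> 'a set \<Rightarrow> real" where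
  "hit_within V E w S \<delta> 0 X = (if X = V then 1 else 0)"
| "hit_within V E w S \<delta> (Suc N) X =
     (if X = V then 1 else step_exp V E w S \<delta> X (hit_within V E w S \<delta> N))"

text \<open>fp(G^S, \<delta>, X) = P[\<exists>t. X_t = V | X_0 = X] = sup_N P[\<exists>t \<le> N. X_t = V | X_0 = X].\<close>
definition fp_set ::
  "'a set \<Rightarrow> ('a \<times> 'a) set \<Rightarrow> ('a \<times> 'a \<Rightarrow> real) \<Rightarrow> 'a set \<Rightarrow> real \<Rightarrow> 'a set \<Rightarrow> real" where
  "fp_set V E w S \<delta> X = (SUP N. hit_within V E w S \<delta> N X)"

definition fp ::
  "'a set \<Rightarrow> ('a \<times> 'a) set \<Rightarrow> ('a \<times> 'a \<Rightarrow> real) \<Rightarrow> 'a set \<Rightarrow> real \<Rightarrow> real" where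
  "fp V E w S \<delta> = (1 / real (card V)) * (\<Sum>u\<in>V. fp_set V E w S \<delta> {u})"

definition fp_inf ::
  "'a set \<Rightarrow> ('a \<times> 'a) set \<Rightarrow> ('a \<times> 'a \<Rightarrow> real) \<Rightarrow> 'a set \<Rightarrow> real" where
  "fp_inf V E w S = Lim at_top (\<lambda>\<delta>. fp V E w S \<delta>)"

definition submodular_on :: "'a set \<Rightarrow> ('a set \<Rightarrow> real) \<Rightarrow> bool" where
  "submodular_on V f \<longleftrightarrow>
     (\<forall>S1 S2. S1 \<subseteq> V \<longrightarrow> S2 \<subseteq> V \<longrightarrow> f S1 + f S2 \<ge> f (S1 \<union> S2) + f (S1 \<inter> S2))"

end

theory Submission
  imports Defs
begin

text \<open>The function \<open>n ((vol V)\<^sup>2 - (vol X)\<^sup>2)\<close>, where \<open>vol X\<close> is the total degree of \<open>X\<close>,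
  decreases by at least 1 in expectation per step from every non-absorbing configuration, for all
  \<open>S\<close> and \<open>\<delta>\<close>, so absorption times are bounded uniformly in the bias. A biased node that is
  updated while having a mutant in-neighbour adopts the mutant with probability \<open>1 - O(1/\<delta>)\<close>,
  and a mutant occupying a biased node is lost only through such an \<open>O(1/\<delta>)\<close> rejection. Hence,
  up to \<open>O(1/\<delta>)\<close>, the biased process goes extinct exactly when the neutral voter model dies
  out without ever exposing a node of \<open>S\<close> in this way. So \<open>fp\<^sup>\<infinity>(G\<^sup>S)\<close> is one minus the
  average probability of the event "neutral extinction and \<open>K \<inter> S = {}\<close>", \<open>K\<close> the random set of
  exposed nodes, and the indicator of \<open>K \<inter> S = {}\<close> is supermodular in \<open>S\<close>.\<close>

lemma sum_if_mem_split:
  fixes g :: "'b \<Rightarrow> 'c::semiring_0"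
  assumes "finite A"
  shows "(\<Sum>v\<in>A. g v * (if v \<in> X then y else z)) = (\<Sum>v\<in>A \<inter> X. g v) * y + (\<Sum>v\<in>A - X. g v) * z"
  using assms by (simp add: if_distrib sum.If_cases Diff_eq sum_distrib_right)

lemma convex_comb_mono:
  fixes a :: real
  assumes "0 \<le> a" "a \<le> 1" "x \<le> x'" "y \<le> y'"
  shows "a * x + (1 - a) * y \<le> a * x' + (1 - a) * y'"
  using assms by (intro add_mono mult_left_mono) auto

locale voter_graph =
  fixes V :: "'a set" and E :: "('a \<times> 'a) set"
  assumes finite_V: "finite V" and V_nonempty: "V \<noteq> {}" and E_subset: "E \<subseteq> V \<times> V"
    and self_loops: "\<forall>u\<in>V. (u, u) \<in> E"
begin

abbreviation nV :: real where "nV \<equiv> real (card V)"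

definition deg :: "'a \<Rightarrow> real" where
  "deg u = real (card (in_nbrs E u))"

definition deg_in :: "'a set \<Rightarrow> 'a \<Rightarrow> real" where
  "deg_in X u = real (card (in_nbrs E u \<inter> X))"

definition bias_factor :: "'a set \<Rightarrow> real \<Rightarrow> 'a \<Rightarrow> real" where
  "bias_factor S \<delta> u = (if u \<in> S then 1 + \<delta> else 1)"

definition adopt_prob :: "'a set \<Rightarrow> real \<Rightarrow> 'a set \<Rightarrow> 'a \<Rightarrow> real" where
  "adopt_prob S \<delta> X u =
     bias_factor S \<delta> u * deg_in X u / (bias_factor S \<delta> u * deg_in X u + (deg u - deg_in X u))"

definition neutral_prob :: "'a set \<Rightarrow> 'a \<Rightarrow> real" where
  "neutral_prob X u = deg_in X u / deg u"

definition trans_op :: "'a set \<Rightarrow> real \<Rightarrow> ('a set \<Rightarrow> real) \<Rightarrow> 'a set \<Rightarrow> real" where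
  "trans_op S \<delta> h X =
     (\<Sum>u\<in>V. adopt_prob S \<delta> X u * h (insert u X) + (1 - adopt_prob S \<delta> X u) * h (X - {u})) / nV"

lemma card_V_pos: "nV > 0"
  using finite_V V_nonempty by (simp add: card_gt_0_iff)

lemma in_nbrs_subset: "in_nbrs E u \<subseteq> V"
  using E_subset by (auto simp: in_nbrs_def)

lemma finite_in_nbrs: "finite (in_nbrs E u)"
  using in_nbrs_subset finite_V finite_subset by blast

lemma self_in_nbrs: "u \<in> V \<Longrightarrow> u \<in> in_nbrs E u"
  using self_loops by (auto simp: in_nbrs_def)

lemma deg_ge_1: "u \<in> V \<Longrightarrow> 1 \<le> deg u"
  using finite_in_nbrs self_in_nbrs by (fastforce simp: deg_def Suc_le_eq card_gt_0_iff)

lemma deg_le_card_V: "deg u \<le> nV"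
  unfolding deg_def using card_mono[OF finite_V in_nbrs_subset] by simp

lemma deg_in_nonneg: "0 \<le> deg_in X u"
  by (simp add: deg_in_def)

lemma deg_in_le_deg: "deg_in X u \<le> deg u"
  unfolding deg_in_def deg_def using card_mono[OF finite_in_nbrs, of "in_nbrs E u \<inter> X"] by auto

lemma deg_in_ge_1: "in_nbrs E u \<inter> X \<noteq> {} \<Longrightarrow> 1 \<le> deg_in X u"
  using finite_in_nbrs by (simp add: deg_in_def Suc_le_eq card_gt_0_iff)

lemma deg_in_eq_0: "in_nbrs E u \<inter> X = {} \<Longrightarrow> deg_in X u = 0"
  by (simp add: deg_in_def)

lemma deg_in_eq_deg: "in_nbrs E u \<subseteq> X \<Longrightarrow> deg_in X u = deg u"
  by (simp add: deg_in_def deg_def Int_absorb2)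

lemma adopt_denom_pos:
  assumes "u \<in> V" "0 \<le> \<delta>"
  shows "0 < bias_factor S \<delta> u * deg_in X u + (deg u - deg_in X u)"
proof -
  have "1 \<le> bias_factor S \<delta> u" using assms(2) by (simp add: bias_factor_def)
  then have "deg_in X u \<le> bias_factor S \<delta> u * deg_in X u"
    using deg_in_nonneg mult_right_mono by fastforce
  then show ?thesis using deg_ge_1[OF assms(1)] deg_in_le_deg[of X u] by linarith
qed

lemma adopt_prob_nonneg: "u \<in> V \<Longrightarrow> 0 \<le> \<delta> \<Longrightarrow> 0 \<le> adopt_prob S \<delta> X u"
  using adopt_denom_pos[of u \<delta> S X] deg_in_nonneg[of X u]
  by (simp add: adopt_prob_def bias_factor_def)

lemma adopt_prob_le_1: "u \<in> V \<Longrightarrow> 0 \<le> \<delta> \<Longrightarrow> adopt_prob S \<delta> X u \<le> 1"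
  using adopt_denom_pos[of u \<delta> S X] deg_in_le_deg[of X u] by (simp add: adopt_prob_def)

lemma adopt_prob_notin: "u \<notin> S \<Longrightarrow> adopt_prob S \<delta> X u = neutral_prob X u"
  by (simp add: adopt_prob_def neutral_prob_def bias_factor_def)

lemma neutral_prob_nonneg: "0 \<le> neutral_prob X u"
  by (simp add: neutral_prob_def deg_def deg_in_def)

lemma neutral_prob_le_1: "u \<in> V \<Longrightarrow> neutral_prob X u \<le> 1"
  using deg_ge_1[of u] deg_in_le_deg[of X u] by (simp add: neutral_prob_def)

lemma neutral_prob_le_adopt_prob:
  assumes "u \<in> V" "0 \<le> \<delta>"
  shows "neutral_prob X u \<le> adopt_prob S \<delta> X u"
proof -
  define b k d where "b = bias_factor S \<delta> u" and "k = deg_in X u" and "d = deg u"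
  have "1 \<le> b" "0 \<le> k" "k \<le> d" "1 \<le> d"
    using assms deg_in_nonneg deg_in_le_deg deg_ge_1 by (auto simp: b_def k_def d_def bias_factor_def)
  moreover have "0 < b * k + (d - k)"
    using adopt_denom_pos[OF assms] by (simp add: b_def k_def d_def)
  moreover have "k * (b * k + (d - k)) \<le> b * k * d \<longleftrightarrow> 0 \<le> (b - 1) * k * (d - k)"
    by (simp add: algebra_simps)
  ultimately have "k / d \<le> b * k / (b * k + (d - k))"
    by (simp add: divide_simps mult.commute)
  then show ?thesis by (simp add: neutral_prob_def adopt_prob_def b_def k_def d_def)
qed

lemma adopt_prob_eq_0: "in_nbrs E u \<inter> X = {} \<Longrightarrow> adopt_prob S \<delta> X u = 0"
  by (simp add: adopt_prob_def deg_in_eq_0)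

lemma neutral_prob_eq_0: "in_nbrs E u \<inter> X = {} \<Longrightarrow> neutral_prob X u = 0"
  by (simp add: neutral_prob_def deg_in_eq_0)

lemma adopt_prob_eq_1: "u \<in> V \<Longrightarrow> in_nbrs E u \<subseteq> X \<Longrightarrow> 0 \<le> \<delta> \<Longrightarrow> adopt_prob S \<delta> X u = 1"
  using deg_ge_1[of u] by (simp add: adopt_prob_def deg_in_eq_deg bias_factor_def)

lemma reject_prob_le:
  assumes "u \<in> V" "u \<in> S" "in_nbrs E u \<inter> X \<noteq> {}" "0 \<le> \<delta>"
  shows "1 - adopt_prob S \<delta> X u \<le> nV / (1 + \<delta>)"
proof -
  define k d where "k = deg_in X u" and "d = deg u"
  have k: "1 \<le> k" "k \<le> d" and d: "d \<le> nV"
    using deg_in_ge_1[OF assms(3)] deg_in_le_deg deg_le_card_V by (auto simp: k_def d_def)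
  have "1 + \<delta> \<le> (1 + \<delta>) * k"
    using k assms(4) mult_left_mono[of 1 k "1 + \<delta>"] by simp
  then have denom: "1 + \<delta> \<le> (1 + \<delta>) * k + (d - k)"
    using k by linarith
  have "1 - adopt_prob S \<delta> X u = (d - k) / ((1 + \<delta>) * k + (d - k))"
    using denom assms(2,4) by (simp add: adopt_prob_def bias_factor_def k_def d_def divide_simps)
  also have "\<dots> \<le> (d - k) / (1 + \<delta>)"
    using denom k assms(4) by (intro divide_left_mono) auto
  also have "\<dots> \<le> nV / (1 + \<delta>)"
    using d k assms(4) by (intro divide_right_mono) auto
  finally show ?thesis .
qed

lemma sum_fbias_in:
  "(\<Sum>v\<in>in_nbrs E u \<inter> X. fbias S \<delta> X v u) = bias_factor S \<delta> u * deg_in X u"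
  by (simp add: fbias_def bias_factor_def deg_in_def)

lemma sum_fbias_out:
  "(\<Sum>v\<in>in_nbrs E u - X. fbias S \<delta> X v u) = deg u - deg_in X u"
proof -
  have "card (in_nbrs E u \<inter> X) \<le> card (in_nbrs E u)"
    using finite_in_nbrs by (intro card_mono) auto
  then show ?thesis
    using finite_in_nbrs
    by (simp add: fbias_def deg_def deg_in_def card_Diff_subset_Int Int_commute of_nat_diff)
qed

lemma step_exp_eq_trans_op:
  assumes "0 \<le> \<delta>"
  shows "step_exp V E (\<lambda>_. 1) S \<delta> X h = trans_op S \<delta> h X"
proof -
  have "(\<Sum>v\<in>in_nbrs E u. fbias S \<delta> X v u / (\<Sum>x\<in>in_nbrs E u. fbias S \<delta> X x u)
          * h (if v \<in> X then insert u X else X - {u}))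
      = adopt_prob S \<delta> X u * h (insert u X) + (1 - adopt_prob S \<delta> X u) * h (X - {u})"
    if "u \<in> V" for u
  proof -
    have total: "(\<Sum>x\<in>in_nbrs E u. fbias S \<delta> X x u)
        = bias_factor S \<delta> u * deg_in X u + (deg u - deg_in X u)"
      using sum.Int_Diff[OF finite_in_nbrs, where g = "\<lambda>x. fbias S \<delta> X x u" and B = X]
      by (simp add: sum_fbias_in sum_fbias_out)
    show ?thesis
      using adopt_denom_pos[OF that assms, of S X]
      unfolding total if_distrib[of h] sum_if_mem_split[OF finite_in_nbrs]
      by (simp add: sum_divide_distrib[symmetric] sum_fbias_in sum_fbias_out adopt_prob_def
          divide_simps)
  qed
  then show ?thesis
    unfolding step_exp_def trans_op_def by (simp add: sum_divide_distrib)
qed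

lemma trans_op_const: "trans_op S \<delta> (\<lambda>_. c) X = c"
  using card_V_pos by (simp add: trans_op_def algebra_simps)

lemma trans_op_mono:
  assumes "0 \<le> \<delta>"
    and "\<And>u. u \<in> V \<Longrightarrow> h (insert u X) \<le> h' (insert u X)"
    and "\<And>u. u \<in> V \<Longrightarrow> h (X - {u}) \<le> h' (X - {u})"
  shows "trans_op S \<delta> h X \<le> trans_op S \<delta> h' X"
  unfolding trans_op_def using card_V_pos assms adopt_prob_nonneg adopt_prob_le_1
  by (intro divide_right_mono sum_mono convex_comb_mono) auto

lemma trans_op_unit_interval:
  assumes "0 \<le> \<delta>" "\<And>Y. 0 \<le> h Y \<and> h Y \<le> 1"
  shows "0 \<le> trans_op S \<delta> h X \<and> trans_op S \<delta> h X \<le> 1"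
proof -
  have "trans_op S \<delta> (\<lambda>_. 0) X \<le> trans_op S \<delta> h X" "trans_op S \<delta> h X \<le> trans_op S \<delta> (\<lambda>_. 1) X"
    using assms by (auto intro!: trans_op_mono)
  then show ?thesis by (simp add: trans_op_const)
qed

lemma trans_op_add: "trans_op S \<delta> (\<lambda>Y. h Y + h' Y) X = trans_op S \<delta> h X + trans_op S \<delta> h' X"
  unfolding trans_op_def by (simp add: sum.distrib[symmetric] add_divide_distrib[symmetric] algebra_simps)

lemma trans_op_cmult: "trans_op S \<delta> (\<lambda>Y. c * h Y) X = c * trans_op S \<delta> h X"
  unfolding trans_op_def by (simp add: sum_distrib_left algebra_simps)

lemma trans_op_sum: "trans_op S \<delta> (\<lambda>Y. \<Sum>k\<in>K. h k Y) X = (\<Sum>k\<in>K. trans_op S \<delta> (h k) X)"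
  unfolding trans_op_def
  by (simp add: sum_divide_distrib sum_distrib_left sum.distrib[symmetric] algebra_simps sum.swap[of _ V])

lemma trans_op_empty: "trans_op S \<delta> h {} = h {}"
  using card_V_pos by (simp add: trans_op_def adopt_prob_eq_0)

lemma trans_op_V: "0 \<le> \<delta> \<Longrightarrow> trans_op S \<delta> h V = h V"
  using card_V_pos in_nbrs_subset by (simp add: trans_op_def adopt_prob_eq_1 insert_absorb)

lemma trans_op_le_plus:
  assumes "\<And>u. u \<in> V \<Longrightarrow>
      adopt_prob S \<delta> X u * h (insert u X) + (1 - adopt_prob S \<delta> X u) * h (X - {u})
      \<le> p u + (adopt_prob S \<delta> X u * h' (insert u X) + (1 - adopt_prob S \<delta> X u) * h' (X - {u})) + c"
  shows "trans_op S \<delta> h X \<le> (\<Sum>u\<in>V. p u) / nV + trans_op S \<delta> h' X + c"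
proof -
  have "trans_op S \<delta> h X \<le> (\<Sum>u\<in>V. p u + (adopt_prob S \<delta> X u * h' (insert u X)
      + (1 - adopt_prob S \<delta> X u) * h' (X - {u})) + c) / nV"
    unfolding trans_op_def using assms card_V_pos by (intro divide_right_mono sum_mono) auto
  also have "\<dots> = (\<Sum>u\<in>V. p u) / nV + trans_op S \<delta> h' X + c"
    using card_V_pos by (simp add: trans_op_def sum.distrib add_divide_distrib)
  finally show ?thesis .
qed

abbreviation fix_within :: "'a set \<Rightarrow> real \<Rightarrow> nat \<Rightarrow> 'a set \<Rightarrow> real" where
  "fix_within S \<delta> N X \<equiv> hit_within V E (\<lambda>_. 1) S \<delta> N X"

fun extinct_within :: "'a set \<Rightarrow> real \<Rightarrow> nat \<Rightarrow> 'a set \<Rightarrow> real" where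
  "extinct_within S \<delta> 0 X = (if X = {} then 1 else 0)"
| "extinct_within S \<delta> (Suc N) X = trans_op S \<delta> (extinct_within S \<delta> N) X"

fun unabsorbed :: "'a set \<Rightarrow> real \<Rightarrow> nat \<Rightarrow> 'a set \<Rightarrow> real" where
  "unabsorbed S \<delta> 0 X = (if X = {} \<or> X = V then 0 else 1)"
| "unabsorbed S \<delta> (Suc N) X =
     (if X = {} \<or> X = V then 0 else trans_op S \<delta> (unabsorbed S \<delta> N) X)"

definition extinct :: "'a set \<Rightarrow> real \<Rightarrow> 'a set \<Rightarrow> real" where
  "extinct S \<delta> X = (SUP N. extinct_within S \<delta> N X)"

lemma fix_within_Suc:
  "0 \<le> \<delta> \<Longrightarrow> fix_within S \<delta> (Suc N) X = (if X = V then 1 else trans_op S \<delta> (fix_within S \<delta> N) X)"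
  by (simp add: step_exp_eq_trans_op)

lemma fix_within_empty: "0 \<le> \<delta> \<Longrightarrow> fix_within S \<delta> N {} = 0"
  using V_nonempty by (induction N) (simp_all only: fix_within_Suc, simp_all add: trans_op_empty)

lemma extinct_within_empty: "extinct_within S \<delta> N {} = 1"
  by (induction N) (simp_all add: trans_op_empty)

lemma extinct_within_V: "0 \<le> \<delta> \<Longrightarrow> extinct_within S \<delta> N V = 0"
  using V_nonempty by (induction N) (simp_all add: trans_op_V)

lemma fix_within_unit_interval: "0 \<le> \<delta> \<Longrightarrow> 0 \<le> fix_within S \<delta> N X \<and> fix_within S \<delta> N X \<le> 1"
proof (induction N arbitrary: X)
  case (Suc N)
  then show ?case
    using trans_op_unit_interval[OF Suc.prems Suc.IH] by (simp only: fix_within_Suc) simp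
qed simp

lemma extinct_within_unit_interval:
  "0 \<le> \<delta> \<Longrightarrow> 0 \<le> extinct_within S \<delta> N X \<and> extinct_within S \<delta> N X \<le> 1"
proof (induction N arbitrary: X)
  case (Suc N)
  then show ?case using trans_op_unit_interval[OF Suc.prems Suc.IH] by simp
qed simp

lemma unabsorbed_unit_interval: "0 \<le> \<delta> \<Longrightarrow> 0 \<le> unabsorbed S \<delta> N X \<and> unabsorbed S \<delta> N X \<le> 1"
proof (induction N arbitrary: X)
  case (Suc N)
  then show ?case using trans_op_unit_interval[OF Suc.prems Suc.IH] by simp
qed simp

lemma fix_extinct_unabsorbed:
  "0 \<le> \<delta> \<Longrightarrow> fix_within S \<delta> N X + extinct_within S \<delta> N X + unabsorbed S \<delta> N X = 1"
proof (induction N arbitrary: X)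
  case 0
  then show ?case using V_nonempty by auto
next
  case (Suc N)
  consider "X = V" | "X = {}" | "X \<noteq> V" "X \<noteq> {}" by blast
  then show ?case
  proof cases
    case 1
    then show ?thesis using Suc.prems by (simp add: fix_within_Suc extinct_within_V del: extinct_within.simps)
  next
    case 2
    then show ?thesis
      using fix_within_empty[OF Suc.prems] by (simp add: extinct_within_empty del: extinct_within.simps hit_within.simps)
  next
    case 3
    then have "fix_within S \<delta> (Suc N) X + extinct_within S \<delta> (Suc N) X + unabsorbed S \<delta> (Suc N) X
        = trans_op S \<delta> (\<lambda>Y. fix_within S \<delta> N Y + extinct_within S \<delta> N Y + unabsorbed S \<delta> N Y) X"
      using Suc.prems by (simp add: fix_within_Suc trans_op_add del: hit_within.simps)
    then show ?thesis using Suc.IH[OF Suc.prems] by (simp add: trans_op_const)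
  qed
qed

lemma fix_within_mono: "0 \<le> \<delta> \<Longrightarrow> fix_within S \<delta> N X \<le> fix_within S \<delta> (Suc N) X"
proof (induction N arbitrary: X)
  case 0
  then show ?case using fix_within_unit_interval[OF 0, of S "Suc 0" X] by (cases "X = V") auto
next
  case (Suc N)
  then show ?case by (simp only: fix_within_Suc[OF Suc.prems]) (auto intro: trans_op_mono)
qed

lemma extinct_within_mono: "0 \<le> \<delta> \<Longrightarrow> extinct_within S \<delta> N X \<le> extinct_within S \<delta> (Suc N) X"
proof (induction N arbitrary: X)
  case 0
  then show ?case using extinct_within_unit_interval[OF 0, of S "Suc 0" X] by (auto simp: trans_op_empty)
next
  case (Suc N)
  then show ?case by (simp only: extinct_within.simps) (auto intro: trans_op_mono)
qed

lemma unabsorbed_antimono: "0 \<le> \<delta> \<Longrightarrow> unabsorbed S \<delta> (Suc N) X \<le> unabsorbed S \<delta> N X"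
proof (induction N arbitrary: X)
  case 0
  then show ?case using unabsorbed_unit_interval[OF 0, of S "Suc 0" X] by (cases "X = {} \<or> X = V") auto
next
  case (Suc N)
  have "trans_op S \<delta> (unabsorbed S \<delta> (Suc N)) X \<le> trans_op S \<delta> (unabsorbed S \<delta> N) X"
    by (intro trans_op_mono Suc.prems Suc.IH)
  then show ?case by (simp only: unabsorbed.simps(2)[of S \<delta> "Suc N"] unabsorbed.simps(2)[of S \<delta> N]) simp
qed

lemma fix_within_tendsto: "0 \<le> \<delta> \<Longrightarrow> (\<lambda>N. fix_within S \<delta> N X) \<longlonglongrightarrow> fp_set V E (\<lambda>_. 1) S \<delta> X"
  unfolding fp_set_def using fix_within_unit_interval fix_within_mono
  by (intro LIMSEQ_incseq_SUP incseq_SucI bdd_aboveI2[where M = 1]) auto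

lemma extinct_within_tendsto: "0 \<le> \<delta> \<Longrightarrow> (\<lambda>N. extinct_within S \<delta> N X) \<longlonglongrightarrow> extinct S \<delta> X"
  unfolding extinct_def using extinct_within_unit_interval extinct_within_mono
  by (intro LIMSEQ_incseq_SUP incseq_SucI bdd_aboveI2[where M = 1]) auto

text \<open>As \<open>\<delta> \<rightarrow> \<infinity>\<close>, a biased node adopts the mutant as soon as it is updated while having a mutant
  in-neighbour, and from then on the mutant fixates with probability tending to 1. The limiting
  extinction probability is therefore that of the neutral voter model dying out without ever
  updating such an exposed node of \<open>S\<close>; the second argument \<open>K\<close> collects the exposed nodes.\<close>

definition expose :: "'a set \<Rightarrow> 'a \<Rightarrow> 'a set \<Rightarrow> 'a set" where
  "expose X u K = (if in_nbrs E u \<inter> X \<noteq> {} then insert u K else K)"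

definition neutral_step :: "('a set \<Rightarrow> 'a set \<Rightarrow> real) \<Rightarrow> 'a set \<Rightarrow> 'a set \<Rightarrow> real" where
  "neutral_step g K X =
     (\<Sum>u\<in>V. neutral_prob X u * g (expose X u K) (insert u X)
        + (1 - neutral_prob X u) * g (expose X u K) (X - {u})) / nV"

fun extinct_unexposed_within :: "'a set \<Rightarrow> nat \<Rightarrow> 'a set \<Rightarrow> 'a set \<Rightarrow> real" where
  "extinct_unexposed_within S 0 K X = of_bool (X = {} \<and> K \<inter> S = {})"
| "extinct_unexposed_within S (Suc N) K X =
     (if X = {} then of_bool (K \<inter> S = {}) else neutral_step (extinct_unexposed_within S N) K X)"

definition extinct_unexposed :: "'a set \<Rightarrow> 'a set \<Rightarrow> 'a set \<Rightarrow> real" where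
  "extinct_unexposed S K X = (SUP N. extinct_unexposed_within S N K X)"

lemma neutral_step_const: "neutral_step (\<lambda>_ _. c) K X = c"
  using card_V_pos by (simp add: neutral_step_def algebra_simps)

lemma neutral_step_mono:
  "(\<And>K Y. g K Y \<le> g' K Y) \<Longrightarrow> neutral_step g K X \<le> neutral_step g' K X"
  unfolding neutral_step_def using card_V_pos neutral_prob_nonneg neutral_prob_le_1
  by (intro divide_right_mono sum_mono convex_comb_mono) auto

lemma neutral_step_add:
  "neutral_step (\<lambda>K Y. g K Y + g' K Y) K X = neutral_step g K X + neutral_step g' K X"
  unfolding neutral_step_def by (simp add: sum.distrib[symmetric] add_divide_distrib[symmetric] algebra_simps)

lemma extinct_unexposed_within_exposed:
  "extinct_unexposed_within S N K X = (if K \<inter> S = {} then extinct_unexposed_within S N {} X else 0)"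
proof (induction N arbitrary: K X)
  case (Suc N)
  have "expose X u K \<inter> S = {} \<longleftrightarrow> K \<inter> S = {} \<and> expose X u {} \<inter> S = {}" for u
    by (auto simp: expose_def)
  then have "extinct_unexposed_within S N (expose X u K) Y
      = (if K \<inter> S = {} then extinct_unexposed_within S N (expose X u {}) Y else 0)" for u Y
    using Suc.IH[of "expose X u K" Y] Suc.IH[of "expose X u {}" Y] by auto
  then show ?case by (simp add: neutral_step_def)
qed simp

lemma extinct_unexposed_within_Suc_empty:
  assumes "X \<noteq> {}"
  shows "extinct_unexposed_within S (Suc N) {} X =
    (\<Sum>u\<in>V. if u \<in> S \<and> in_nbrs E u \<inter> X \<noteq> {} then 0
      else neutral_prob X u * extinct_unexposed_within S N {} (insert u X)
        + (1 - neutral_prob X u) * extinct_unexposed_within S N {} (X - {u})) / nV"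
proof -
  have "extinct_unexposed_within S N (expose X u {}) Y
      = (if u \<in> S \<and> in_nbrs E u \<inter> X \<noteq> {} then 0 else extinct_unexposed_within S N {} Y)" for u Y
    by (subst extinct_unexposed_within_exposed) (auto simp: expose_def)
  then have "neutral_prob X u * extinct_unexposed_within S N (expose X u {}) (insert u X)
      + (1 - neutral_prob X u) * extinct_unexposed_within S N (expose X u {}) (X - {u})
    = (if u \<in> S \<and> in_nbrs E u \<inter> X \<noteq> {} then 0
      else neutral_prob X u * extinct_unexposed_within S N {} (insert u X)
        + (1 - neutral_prob X u) * extinct_unexposed_within S N {} (X - {u}))" for u
    by simp
  then show ?thesis using assms by (simp add: neutral_step_def)
qed

lemma extinct_unexposed_within_unit_interval:
  "0 \<le> extinct_unexposed_within S N K X \<and> extinct_unexposed_within S N K X \<le> 1"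
proof (induction N arbitrary: K X)
  case (Suc N)
  then show ?case
    using neutral_step_mono[of "\<lambda>_ _. 0" "extinct_unexposed_within S N" K X]
      neutral_step_mono[of "extinct_unexposed_within S N" "\<lambda>_ _. 1" K X]
    by (simp add: neutral_step_const)
qed simp

lemma extinct_unexposed_within_mono:
  "extinct_unexposed_within S N K X \<le> extinct_unexposed_within S (Suc N) K X"
proof (induction N arbitrary: K X)
  case 0
  then show ?case using extinct_unexposed_within_unit_interval[of S "Suc 0" K X] by (cases "X = {}") auto
next
  case (Suc N)
  have "neutral_step (extinct_unexposed_within S N) K X \<le> neutral_step (extinct_unexposed_within S (Suc N)) K X"
    by (intro neutral_step_mono Suc.IH)
  then show ?case by simp
qed

lemma disjoint_indicator_supermodular:
  "of_bool (K \<inter> S1 = {}) + of_bool (K \<inter> S2 = {})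
    \<le> (of_bool (K \<inter> (S1 \<union> S2) = {}) + of_bool (K \<inter> (S1 \<inter> S2) = {}) :: real)"
  by (cases "K \<inter> S1 = {}"; cases "K \<inter> S2 = {}") auto

text \<open>The neutral dynamics does not depend on \<open>S\<close>; only the terminal indicator does.\<close>

lemma extinct_unexposed_within_supermodular:
  "extinct_unexposed_within S1 N K X + extinct_unexposed_within S2 N K X
    \<le> extinct_unexposed_within (S1 \<union> S2) N K X + extinct_unexposed_within (S1 \<inter> S2) N K X"
proof (induction N arbitrary: K X)
  case (Suc N)
  have "neutral_step (extinct_unexposed_within S1 N) K X + neutral_step (extinct_unexposed_within S2 N) K X
      \<le> neutral_step (extinct_unexposed_within (S1 \<union> S2) N) K X
        + neutral_step (extinct_unexposed_within (S1 \<inter> S2) N) K X"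
    using neutral_step_mono[OF Suc.IH] by (simp only: neutral_step_add[symmetric])
  then show ?case
    using disjoint_indicator_supermodular[of K S1 S2] by (cases "X = {}") (simp_all only: extinct_unexposed_within.simps if_True if_False simp_thms)
next
  case 0
  show ?case
    using disjoint_indicator_supermodular[of K S1 S2] by (cases "X = {}") simp_all
qed

lemma extinct_unexposed_within_tendsto:
  "(\<lambda>N. extinct_unexposed_within S N K X) \<longlonglongrightarrow> extinct_unexposed S K X"
  unfolding extinct_unexposed_def
  using extinct_unexposed_within_unit_interval extinct_unexposed_within_mono
  by (intro LIMSEQ_incseq_SUP incseq_SucI bdd_aboveI2[where M = 1]) auto

lemma extinct_unexposed_within_le: "extinct_unexposed_within S N K X \<le> extinct_unexposed S K X"
  using incseq_le[OF incseq_SucI extinct_unexposed_within_tendsto] extinct_unexposed_within_mono by blast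

lemma extinct_unexposed_exposed:
  "extinct_unexposed S K X = (if K \<inter> S = {} then extinct_unexposed S {} X else 0)"
  unfolding extinct_unexposed_def by (subst extinct_unexposed_within_exposed) simp

lemma extinct_unexposed_supermodular:
  "extinct_unexposed S1 K X + extinct_unexposed S2 K X
    \<le> extinct_unexposed (S1 \<union> S2) K X + extinct_unexposed (S1 \<inter> S2) K X"
  using extinct_unexposed_within_supermodular
  by (intro LIMSEQ_le[OF tendsto_add[OF extinct_unexposed_within_tendsto extinct_unexposed_within_tendsto]
        tendsto_add[OF extinct_unexposed_within_tendsto extinct_unexposed_within_tendsto]]) auto

lemma extinct_unexposed_within_le_extinct_within:
  assumes "0 \<le> \<delta>"
  shows "X \<inter> S = {} \<Longrightarrow> extinct_unexposed_within S N {} X \<le> extinct_within S \<delta> N X"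
proof (induction N arbitrary: X)
  case (Suc N)
  let ?P = "extinct_unexposed_within S N {}" and ?Q = "extinct_within S \<delta> N"
  have step: "(if u \<in> S \<and> in_nbrs E u \<inter> X \<noteq> {} then 0
        else neutral_prob X u * ?P (insert u X) + (1 - neutral_prob X u) * ?P (X - {u}))
      \<le> adopt_prob S \<delta> X u * ?Q (insert u X) + (1 - adopt_prob S \<delta> X u) * ?Q (X - {u})"
    if u: "u \<in> V" for u
  proof -
    have a: "0 \<le> adopt_prob S \<delta> X u" "adopt_prob S \<delta> X u \<le> 1"
      using adopt_prob_nonneg adopt_prob_le_1 u assms by auto
    consider "u \<in> S" "in_nbrs E u \<inter> X \<noteq> {}" | "in_nbrs E u \<inter> X = {}" | "u \<notin> S" by blast
    then show ?thesis
    proof cases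
      case 1
      then show ?thesis using a extinct_within_unit_interval[OF assms] by simp
    next
      case 2
      moreover have "(X - {u}) \<inter> S = {}" using Suc.prems by blast
      ultimately show ?thesis using Suc.IH[of "X - {u}"] by (simp add: adopt_prob_eq_0 neutral_prob_eq_0)
    next
      case 3
      moreover have "insert u X \<inter> S = {}" "(X - {u}) \<inter> S = {}" using 3 Suc.prems by auto
      ultimately show ?thesis
        unfolding adopt_prob_notin[OF 3] using neutral_prob_nonneg neutral_prob_le_1[OF u]
        by (simp add: 3 convex_comb_mono Suc.IH)
    qed
  qed
  show ?case
  proof (cases "X = {}")
    case False
    then show ?thesis
      unfolding extinct_unexposed_within_Suc_empty[OF False] extinct_within.simps trans_op_def
      using step card_V_pos by (intro divide_right_mono sum_mono) auto
  qed (simp add: extinct_within_empty del: extinct_within.simps)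
qed simp

end

locale connected_voter_graph = voter_graph +
  assumes sym_E: "sym E" and connected: "\<forall>u\<in>V. \<forall>v\<in>V. (u, v) \<in> E\<^sup>*"
begin

lemma exists_boundary_node:
  assumes "X \<subseteq> V" "X \<noteq> {}" "X \<noteq> V"
  shows "\<exists>u\<in>V - X. in_nbrs E u \<inter> X \<noteq> {}"
proof -
  obtain x y where "x \<in> X" "y \<in> V - X" using assms by blast
  then have "(x, y) \<in> E\<^sup>*" using connected assms(1) by blast
  moreover have "y \<notin> X" using \<open>y \<in> V - X\<close> by blast
  ultimately have "\<exists>a b. (a, b) \<in> E \<and> a \<in> X \<and> b \<notin> X"
    using \<open>x \<in> X\<close> by (induction rule: rtrancl_induct) blast+
  then obtain a b where "(a, b) \<in> E" "a \<in> X" "b \<notin> X" by blast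
  then show ?thesis using E_subset by (auto simp: in_nbrs_def)
qed

definition vol :: "'a set \<Rightarrow> real" where
  "vol X = (\<Sum>x\<in>X. deg x)"

lemma sum_deg_in_eq_vol:
  assumes "X \<subseteq> V"
  shows "(\<Sum>u\<in>V. deg_in X u) = vol X"
proof -
  have fin: "finite X" using assms finite_V finite_subset by blast
  have "deg_in X u = (\<Sum>x\<in>X. of_bool ((x, u) \<in> E))" for u
    using fin by (simp add: deg_in_def in_nbrs_def Int_def conj_commute)
  moreover have "deg x = (\<Sum>u\<in>V. of_bool ((x, u) \<in> E))" if "x \<in> X" for x
  proof -
    have "in_nbrs E x = V \<inter> {u. (x, u) \<in> E}"
      using sym_E E_subset by (auto simp: in_nbrs_def sym_def)
    then show ?thesis using finite_V by (simp add: deg_def)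
  qed
  ultimately show ?thesis
    unfolding vol_def by (simp add: sum.swap[of _ V X])
qed

text \<open>The potential is a Lyapunov function for absorption: with \<open>M = vol X\<close>, a step changes \<open>M\<close>
  by \<open>\<Delta>\<close> with \<open>E \<Delta> \<ge> 0\<close> (biasing only raises adoption probabilities, and for the neutral
  ones \<open>E \<Delta> = 0\<close> by double counting) and \<open>E \<Delta>\<^sup>2 \<ge> 1/n\<close> off the absorbing states (there
  is a boundary node); hence \<open>E ((M + \<Delta>)\<^sup>2 - M\<^sup>2) \<ge> 1/n\<close>.\<close>

definition potential :: "'a set \<Rightarrow> real" where
  "potential X = nV * ((vol V)\<^sup>2 - (vol X)\<^sup>2)"

lemma vol_nonneg: "0 \<le> vol X"
  unfolding vol_def deg_def by (simp add: sum_nonneg)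

lemma vol_le_vol_V: "X \<subseteq> V \<Longrightarrow> vol X \<le> vol V"
  unfolding vol_def deg_def using finite_V by (intro sum_mono2) auto

lemma vol_insert: "finite X \<Longrightarrow> vol (insert u X) = vol X + of_bool (u \<notin> X) * deg u"
  unfolding vol_def by (simp add: insert_absorb)

lemma vol_remove: "finite X \<Longrightarrow> vol (X - {u}) = vol X - of_bool (u \<in> X) * deg u"
  unfolding vol_def by (simp add: sum_diff1)

lemma potential_nonneg: "X \<subseteq> V \<Longrightarrow> 0 \<le> potential X"
  unfolding potential_def using vol_le_vol_V vol_nonneg card_V_pos by (simp add: power_mono)

lemma potential_le_empty: "potential X \<le> potential {}"
  unfolding potential_def using card_V_pos by (simp add: vol_def)

lemma trans_op_potential:
  assumes "X \<subseteq> V"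
  shows "trans_op S \<delta> potential X = potential X
    - (2 * vol X * (\<Sum>u\<in>V. deg u * (adopt_prob S \<delta> X u - of_bool (u \<in> X)))
       + (\<Sum>u\<in>V. (deg u)\<^sup>2 * (if u \<in> X then 1 - adopt_prob S \<delta> X u else adopt_prob S \<delta> X u)))"
proof -
  define r where "r u = 2 * vol X * (deg u * (adopt_prob S \<delta> X u - of_bool (u \<in> X)))
    + (deg u)\<^sup>2 * (if u \<in> X then 1 - adopt_prob S \<delta> X u else adopt_prob S \<delta> X u)" for u
  have fin: "finite X" using assms finite_V finite_subset by blast
  have "adopt_prob S \<delta> X u * potential (insert u X) + (1 - adopt_prob S \<delta> X u) * potential (X - {u})
      = potential X - nV * r u" for u
  proof (cases "u \<in> X")
    case True
    then have "vol (insert u X) = vol X" "vol (X - {u}) = vol X - deg u"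
      using vol_remove[OF fin] by (simp_all add: insert_absorb)
    note vol_eqs = this
    show ?thesis unfolding potential_def r_def vol_eqs using True by simp algebra
  next
    case False
    then have "vol (insert u X) = vol X + deg u" "vol (X - {u}) = vol X"
      using vol_insert[OF fin] by simp_all
    note vol_eqs = this
    show ?thesis unfolding potential_def r_def vol_eqs using False by simp algebra
  qed
  then have "trans_op S \<delta> potential X = (\<Sum>u\<in>V. potential X - nV * r u) / nV"
    by (simp add: trans_op_def)
  also have "\<dots> = potential X - (\<Sum>u\<in>V. r u)"
    using card_V_pos by (simp add: sum_subtractf sum_distrib_right[symmetric] field_simps)
  finally show ?thesis by (simp add: r_def sum.distrib sum_distrib_left)
qed

lemma vol_drift_nonneg:
  assumes "0 \<le> \<delta>" "X \<subseteq> V"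
  shows "0 \<le> (\<Sum>u\<in>V. deg u * (adopt_prob S \<delta> X u - of_bool (u \<in> X)))"
proof -
  have "deg u * (neutral_prob X u - of_bool (u \<in> X)) = deg_in X u - deg u * of_bool (u \<in> X)"
    if "u \<in> V" for u
    using deg_ge_1[OF that] by (simp add: neutral_prob_def right_diff_distrib)
  then have "(\<Sum>u\<in>V. deg u * (neutral_prob X u - of_bool (u \<in> X)))
      = (\<Sum>u\<in>V. deg_in X u) - (\<Sum>u\<in>V. deg u * of_bool (u \<in> X))"
    by (simp add: sum_subtractf[symmetric])
  also have "\<dots> = 0"
    using sum_deg_in_eq_vol[OF assms(2)] finite_V assms(2) by (simp add: vol_def Int_absorb1)
  finally have "0 = (\<Sum>u\<in>V. deg u * (neutral_prob X u - of_bool (u \<in> X)))" ..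
  also have "\<dots> \<le> (\<Sum>u\<in>V. deg u * (adopt_prob S \<delta> X u - of_bool (u \<in> X)))"
    using neutral_prob_le_adopt_prob[OF _ assms(1)] by (intro sum_mono mult_left_mono) (auto simp: deg_def)
  finally show ?thesis .
qed

lemma vol_sq_drift_ge_1:
  assumes "0 \<le> \<delta>" "X \<subseteq> V" "X \<noteq> {}" "X \<noteq> V"
  shows "1 \<le> (\<Sum>u\<in>V. (deg u)\<^sup>2 * (if u \<in> X then 1 - adopt_prob S \<delta> X u else adopt_prob S \<delta> X u))"
proof -
  obtain u where u: "u \<in> V" "u \<notin> X" "in_nbrs E u \<inter> X \<noteq> {}"
    using exists_boundary_node[OF assms(2-4)] by blast
  have "1 \<le> deg u * deg_in X u"
    using deg_ge_1[OF u(1)] deg_in_ge_1[OF u(3)] mult_mono[of 1 "deg u" 1 "deg_in X u"] by simp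
  also have "\<dots> = (deg u)\<^sup>2 * neutral_prob X u"
    using deg_ge_1[OF u(1)] by (simp add: neutral_prob_def power2_eq_square)
  also have "\<dots> \<le> (deg u)\<^sup>2 * adopt_prob S \<delta> X u"
    using neutral_prob_le_adopt_prob[OF u(1) assms(1)] by (simp add: mult_left_mono)
  also have "\<dots> \<le> (\<Sum>u\<in>V. (deg u)\<^sup>2 * (if u \<in> X then 1 - adopt_prob S \<delta> X u else adopt_prob S \<delta> X u))"
    using member_le_sum[OF u(1), of "\<lambda>u. (deg u)\<^sup>2 * (if u \<in> X then 1 - adopt_prob S \<delta> X u else adopt_prob S \<delta> X u)"]
      u(2) finite_V adopt_prob_nonneg[OF _ assms(1)] adopt_prob_le_1[OF _ assms(1)] by simp
  finally show ?thesis .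
qed

lemma potential_drift:
  assumes "0 \<le> \<delta>" "X \<subseteq> V" "X \<noteq> {}" "X \<noteq> V"
  shows "1 + trans_op S \<delta> potential X \<le> potential X"
proof -
  have "0 \<le> 2 * vol X * (\<Sum>u\<in>V. deg u * (adopt_prob S \<delta> X u - of_bool (u \<in> X)))"
    using vol_drift_nonneg[OF assms(1,2)] vol_nonneg[of X] by simp
  then show ?thesis
    using trans_op_potential[OF assms(2), of S \<delta>] vol_sq_drift_ge_1[OF assms, of S] by linarith
qed


lemma unabsorbed_sum_le_potential:
  "0 \<le> \<delta> \<Longrightarrow> X \<subseteq> V \<Longrightarrow> (\<Sum>k<N. unabsorbed S \<delta> k X) \<le> potential X"
proof (induction N arbitrary: X)
  case 0
  then show ?case using potential_nonneg by simp
next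
  case (Suc N)
  show ?case
  proof (cases "X = {} \<or> X = V")
    case True
    then have "(\<Sum>k<Suc N. unabsorbed S \<delta> k X) = 0"
      by (intro sum.neutral) (metis unabsorbed.elims)
    then show ?thesis using potential_nonneg[OF Suc.prems(2)] by simp
  next
    case False
    have "(\<Sum>k<Suc N. unabsorbed S \<delta> k X) = unabsorbed S \<delta> 0 X + (\<Sum>k<N. unabsorbed S \<delta> (Suc k) X)"
      by (rule sum.lessThan_Suc_shift)
    also have "\<dots> = 1 + trans_op S \<delta> (\<lambda>Y. \<Sum>k<N. unabsorbed S \<delta> k Y) X"
      using False by (simp add: trans_op_sum)
    also have "\<dots> \<le> 1 + trans_op S \<delta> potential X"
    proof (intro add_left_mono trans_op_mono)
      fix u assume "u \<in> V"
      then show "(\<Sum>k<N. unabsorbed S \<delta> k (insert u X)) \<le> potential (insert u X)"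
        and "(\<Sum>k<N. unabsorbed S \<delta> k (X - {u})) \<le> potential (X - {u})"
        using Suc.IH[of "insert u X"] Suc.IH[of "X - {u}"] Suc.prems by auto
    qed (rule Suc.prems(1))
    also have "\<dots> \<le> potential X"
      using potential_drift[OF Suc.prems] False by auto
    finally show ?thesis .
  qed
qed

lemma unabsorbed_le:
  assumes "0 \<le> \<delta>" "X \<subseteq> V"
  shows "real N * unabsorbed S \<delta> N X \<le> potential {}"
proof -
  have "antimono (\<lambda>N. unabsorbed S \<delta> N X)"
    using unabsorbed_antimono[OF assms(1)] by (intro decseq_SucI) auto
  then have "unabsorbed S \<delta> N X \<le> unabsorbed S \<delta> k X" if "k < N" for k
    using that by (metis antimonoD less_imp_le)
  then have "real N * unabsorbed S \<delta> N X \<le> (\<Sum>k<N. unabsorbed S \<delta> k X)"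
    using sum_mono[of "{..<N}" "\<lambda>_. unabsorbed S \<delta> N X" "\<lambda>k. unabsorbed S \<delta> k X"] by simp
  also have "\<dots> \<le> potential {}"
    using unabsorbed_sum_le_potential[OF assms] potential_le_empty order_trans by blast
  finally show ?thesis .
qed

lemma unabsorbed_tendsto_0:
  assumes "0 \<le> \<delta>" "X \<subseteq> V"
  shows "(\<lambda>N. unabsorbed S \<delta> N X) \<longlonglongrightarrow> 0"
proof (rule tendsto_sandwich[of "\<lambda>_. 0" _ _ "\<lambda>N. potential {} / real N"])
  show "\<forall>\<^sub>F N in sequentially. 0 \<le> unabsorbed S \<delta> N X"
    using unabsorbed_unit_interval[OF assms(1)] by simp
  show "\<forall>\<^sub>F N in sequentially. unabsorbed S \<delta> N X \<le> potential {} / real N"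
    using unabsorbed_le[OF assms] by (intro eventually_sequentiallyI[of 1]) (simp add: field_simps)
qed (simp_all add: lim_const_over_n)

lemma fp_set_eq_extinct:
  assumes "0 \<le> \<delta>" "X \<subseteq> V"
  shows "fp_set V E (\<lambda>_. 1) S \<delta> X = 1 - extinct S \<delta> X"
proof -
  have "(\<lambda>N. 1 - extinct_within S \<delta> N X - unabsorbed S \<delta> N X) \<longlonglongrightarrow> 1 - extinct S \<delta> X - 0"
    by (intro tendsto_intros extinct_within_tendsto unabsorbed_tendsto_0 assms)
  moreover have "1 - extinct_within S \<delta> N X - unabsorbed S \<delta> N X = fix_within S \<delta> N X" for N
    using fix_extinct_unabsorbed[OF assms(1)] by (simp add: algebra_simps)
  ultimately have "(\<lambda>N. fix_within S \<delta> N X) \<longlonglongrightarrow> 1 - extinct S \<delta> X" by simp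
  then show ?thesis using LIMSEQ_unique[OF fix_within_tendsto[OF assms(1)]] by blast
qed

text \<open>Once the mutant occupies a node of \<open>S\<close> it is lost only if that node is updated while it is
  the last biased mutant; having itself as a mutant in-neighbour, it then rejects with probability
  \<open>O(1/\<delta>)\<close>, and the potential bounds the expected number of steps.\<close>

lemma trans_op_le_potential_biased:
  assumes "0 \<le> \<delta>" "Y \<subseteq> V" "Y \<inter> S \<noteq> {}" "Y \<noteq> V"
    and h_le_1: "\<And>Z. h Z \<le> 1"
    and h_biased: "\<And>Z. Z \<subseteq> V \<Longrightarrow> Z \<inter> S \<noteq> {} \<Longrightarrow> h Z \<le> nV / (1 + \<delta>) * potential Z"
  shows "trans_op S \<delta> h Y \<le> nV / (1 + \<delta>) * potential Y"
proof -
  define \<epsilon> where "\<epsilon> = nV / (1 + \<delta>)"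
  have "0 \<le> \<epsilon>" using assms(1) card_V_pos by (simp add: \<epsilon>_def)
  have "trans_op S \<delta> h Y \<le> (\<Sum>u\<in>V. 0) / nV + trans_op S \<delta> (\<lambda>Z. \<epsilon> * potential Z) Y + \<epsilon>"
  proof (rule trans_op_le_plus)
    fix u assume u: "u \<in> V"
    let ?a = "adopt_prob S \<delta> Y u"
    have a: "0 \<le> ?a" "?a \<le> 1" using adopt_prob_nonneg adopt_prob_le_1 u assms(1) by auto
    have ins: "h (insert u Y) \<le> \<epsilon> * potential (insert u Y)"
      using h_biased[of "insert u Y"] assms(2,3) u unfolding \<epsilon>_def by auto
    show "?a * h (insert u Y) + (1 - ?a) * h (Y - {u})
      \<le> 0 + (?a * (\<epsilon> * potential (insert u Y)) + (1 - ?a) * (\<epsilon> * potential (Y - {u}))) + \<epsilon>"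
    proof (cases "(Y - {u}) \<inter> S = {}")
      case False
      then have "h (Y - {u}) \<le> \<epsilon> * potential (Y - {u})"
        using h_biased[of "Y - {u}"] assms(2) unfolding \<epsilon>_def by auto
      with convex_comb_mono[OF a ins] show ?thesis using \<open>0 \<le> \<epsilon>\<close> by fastforce
    next
      case True
      then have "u \<in> S" "in_nbrs E u \<inter> Y \<noteq> {}" using assms(3) self_in_nbrs[OF u] by auto
      then have "1 - ?a \<le> \<epsilon>" using reject_prob_le[OF u _ _ assms(1)] unfolding \<epsilon>_def by blast
      moreover have "(1 - ?a) * h (Y - {u}) \<le> 1 - ?a"
        using a h_le_1 mult_left_mono[of "h (Y - {u})" 1 "1 - ?a"] by simp
      moreover have "0 \<le> (1 - ?a) * (\<epsilon> * potential (Y - {u}))"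
        using a \<open>0 \<le> \<epsilon>\<close> potential_nonneg[of "Y - {u}"] assms(2) by (intro mult_nonneg_nonneg) auto
      moreover have "?a * h (insert u Y) \<le> ?a * (\<epsilon> * potential (insert u Y))"
        using ins a by (simp add: mult_left_mono)
      ultimately show ?thesis by linarith
    qed
  qed
  also have "\<dots> = \<epsilon> * (1 + trans_op S \<delta> potential Y)"
    by (simp add: trans_op_cmult algebra_simps)
  also have "\<dots> \<le> \<epsilon> * potential Y"
    using potential_drift[OF assms(1,2) _ assms(4)] assms(3) \<open>0 \<le> \<epsilon>\<close> by (intro mult_left_mono) auto
  finally show ?thesis unfolding \<epsilon>_def .
qed

lemma extinct_within_le_biased:
  assumes "0 \<le> \<delta>"
  shows "Y \<subseteq> V \<Longrightarrow> Y \<inter> S \<noteq> {} \<Longrightarrow> extinct_within S \<delta> N Y \<le> nV / (1 + \<delta>) * potential Y"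
proof (induction N arbitrary: Y)
  case 0
  then show ?case using potential_nonneg[OF 0(1)] assms card_V_pos by auto
next
  case (Suc N)
  show ?case
  proof (cases "Y = V")
    case True
    then show ?thesis
      using extinct_within_V[OF assms] by (simp add: potential_def del: extinct_within.simps)
  next
    case False
    then show ?thesis
      using trans_op_le_potential_biased[OF assms Suc.prems False] Suc.IH
        extinct_within_unit_interval[OF assms] by simp
  qed
qed


lemma trans_op_le_unexposed_step:
  assumes "0 \<le> \<delta>" "X \<subseteq> V" "X \<inter> S = {}" "X \<noteq> {}" "X \<noteq> V"
    and h_le_1: "\<And>Z. h Z \<le> 1"
    and h_biased: "\<And>Z. Z \<subseteq> V \<Longrightarrow> Z \<inter> S \<noteq> {} \<Longrightarrow> h Z \<le> nV / (1 + \<delta>) * potential Z"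
    and h_unbiased: "\<And>Z. Z \<subseteq> V \<Longrightarrow> Z \<inter> S = {} \<Longrightarrow>
      h Z \<le> g Z + nV / (1 + \<delta>) * (potential {} + 1) * potential Z"
  shows "trans_op S \<delta> h X \<le>
    (\<Sum>u\<in>V. if u \<in> S \<and> in_nbrs E u \<inter> X \<noteq> {} then 0
      else neutral_prob X u * g (insert u X) + (1 - neutral_prob X u) * g (X - {u})) / nV
    + nV / (1 + \<delta>) * (potential {} + 1) * potential X"
proof -
  define \<epsilon> c where "\<epsilon> = nV / (1 + \<delta>)" and "c = nV / (1 + \<delta>) * (potential {} + 1)"
  have "0 \<le> \<epsilon>" "c = \<epsilon> * potential {} + \<epsilon>"
    using assms(1) card_V_pos by (simp_all add: \<epsilon>_def c_def algebra_simps add_divide_distrib)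
  then have "0 \<le> c" using potential_nonneg[of "{}"] by simp
  define p where "p u = (if u \<in> S \<and> in_nbrs E u \<inter> X \<noteq> {} then 0
      else neutral_prob X u * g (insert u X) + (1 - neutral_prob X u) * g (X - {u}))" for u
  have "trans_op S \<delta> h X \<le> (\<Sum>u\<in>V. p u) / nV + trans_op S \<delta> (\<lambda>Z. c * potential Z) X + c"
  proof (rule trans_op_le_plus)
    fix u assume u: "u \<in> V"
    let ?a = "adopt_prob S \<delta> X u"
    have a: "0 \<le> ?a" "?a \<le> 1" using adopt_prob_nonneg adopt_prob_le_1 u assms(1) by auto
    have pot: "0 \<le> potential (insert u X)" "0 \<le> potential (X - {u})"
      using potential_nonneg[of "insert u X"] potential_nonneg[of "X - {u}"] assms(2) u by auto
    then have c_terms: "0 \<le> ?a * (c * potential (insert u X)) + (1 - ?a) * (c * potential (X - {u}))"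
      using a \<open>0 \<le> c\<close> by simp
    consider "u \<in> S" "in_nbrs E u \<inter> X \<noteq> {}" | "in_nbrs E u \<inter> X = {}" | "u \<notin> S" by blast
    then show "?a * h (insert u X) + (1 - ?a) * h (X - {u})
      \<le> p u + (?a * (c * potential (insert u X)) + (1 - ?a) * (c * potential (X - {u}))) + c"
    proof cases
      case 1
      have "?a * h (insert u X) \<le> ?a * (\<epsilon> * potential (insert u X))"
        using h_biased[of "insert u X"] 1 u a assms(2) unfolding \<epsilon>_def by (intro mult_left_mono) auto
      also have "\<dots> \<le> 1 * (\<epsilon> * potential {})"
        using a pot \<open>0 \<le> \<epsilon>\<close> potential_le_empty by (intro mult_mono mult_left_mono) auto
      finally have "?a * h (insert u X) \<le> \<epsilon> * potential {}" by simp
      moreover have "(1 - ?a) * h (X - {u}) \<le> 1 - ?a"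
        using a h_le_1 mult_left_mono[of "h (X - {u})" 1 "1 - ?a"] by simp
      moreover have "1 - ?a \<le> \<epsilon>" using reject_prob_le[OF u 1 assms(1)] unfolding \<epsilon>_def .
      ultimately show ?thesis using 1 c_terms \<open>c = \<epsilon> * potential {} + \<epsilon>\<close> by (simp add: p_def)
    next
      case 2
      then have "h (X - {u}) \<le> g (X - {u}) + c * potential (X - {u})"
        using h_unbiased[of "X - {u}"] assms(2,3) unfolding c_def by auto
      then show ?thesis using 2 \<open>0 \<le> c\<close> by (simp add: p_def adopt_prob_eq_0 neutral_prob_eq_0)
    next
      case 3
      then have "h (insert u X) \<le> g (insert u X) + c * potential (insert u X)"
        and "h (X - {u}) \<le> g (X - {u}) + c * potential (X - {u})"
        using h_unbiased[of "insert u X"] h_unbiased[of "X - {u}"] assms(2,3) u unfolding c_def by auto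
      from convex_comb_mono[OF a this] show ?thesis
        using 3 \<open>0 \<le> c\<close> by (simp add: p_def adopt_prob_notin algebra_simps)
    qed
  qed
  also have "\<dots> = (\<Sum>u\<in>V. p u) / nV + c * (1 + trans_op S \<delta> potential X)"
    by (simp add: trans_op_cmult algebra_simps)
  also have "\<dots> \<le> (\<Sum>u\<in>V. p u) / nV + c * potential X"
    using potential_drift[OF assms(1,2,4,5)] \<open>0 \<le> c\<close> by (simp add: mult_left_mono)
  finally show ?thesis unfolding p_def c_def .
qed

lemma extinct_within_le_unexposed:
  assumes "0 \<le> \<delta>"
  shows "X \<subseteq> V \<Longrightarrow> X \<inter> S = {} \<Longrightarrow> extinct_within S \<delta> N X
    \<le> extinct_unexposed_within S N {} X + nV / (1 + \<delta>) * (potential {} + 1) * potential X"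
proof (induction N arbitrary: X)
  case 0
  have "0 \<le> nV / (1 + \<delta>) * (potential {} + 1) * potential X"
    using assms card_V_pos potential_nonneg[OF 0(1)] potential_nonneg[of "{}"] by simp
  then show ?case by auto
next
  case (Suc N)
  have nonneg: "0 \<le> nV / (1 + \<delta>) * (potential {} + 1) * potential X"
    using assms card_V_pos potential_nonneg[OF Suc.prems(1)] potential_nonneg[of "{}"] by simp
  consider "X = {}" | "X = V" | "X \<noteq> {}" "X \<noteq> V" by blast
  then show ?case
  proof cases
    case 1
    then show ?thesis using nonneg by (simp add: extinct_within_empty del: extinct_within.simps)
  next
    case 2
    then show ?thesis
      using nonneg extinct_unexposed_within_unit_interval[of S "Suc N" "{}" X] extinct_within_V[OF assms]
      by (simp del: extinct_within.simps extinct_unexposed_within.simps)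
  next
    case 3
    show ?thesis
      unfolding extinct_within.simps extinct_unexposed_within_Suc_empty[OF 3(1)]
      using extinct_within_unit_interval[OF assms] extinct_within_le_biased[OF assms] Suc
      by (intro trans_op_le_unexposed_step[OF assms Suc.prems 3]) auto
  qed
qed

lemma extinct_approx:
  assumes "0 \<le> \<delta>" "X \<subseteq> V"
  shows "\<bar>extinct S \<delta> X - extinct_unexposed S X X\<bar> \<le> nV / (1 + \<delta>) * (potential {} + 1) * potential {}"
proof -
  define \<epsilon> where "\<epsilon> = nV / (1 + \<delta>)"
  have "0 \<le> \<epsilon>" using assms(1) card_V_pos by (simp add: \<epsilon>_def)
  have pot: "0 \<le> potential X" "potential X \<le> potential {}"
    using potential_nonneg[OF assms(2)] potential_le_empty by auto
  have "0 \<le> extinct S \<delta> X"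
    using extinct_within_unit_interval[OF assms(1)]
    by (intro LIMSEQ_le_const[OF extinct_within_tendsto[OF assms(1)]]) blast
  show ?thesis
  proof (cases "X \<inter> S = {}")
    case True
    then have eq: "extinct_unexposed S X X = extinct_unexposed S {} X"
      by (subst extinct_unexposed_exposed) simp
    have "extinct_unexposed S {} X \<le> extinct S \<delta> X"
      using extinct_unexposed_within_le_extinct_within[OF assms(1) True]
      by (intro LIMSEQ_le[OF extinct_unexposed_within_tendsto extinct_within_tendsto[OF assms(1)]]) blast
    moreover have "extinct S \<delta> X \<le> extinct_unexposed S {} X + \<epsilon> * (potential {} + 1) * potential X"
    proof (rule LIMSEQ_le_const2[OF extinct_within_tendsto[OF assms(1)]], intro exI allI impI)
      fix N
      show "extinct_within S \<delta> N X \<le> extinct_unexposed S {} X + \<epsilon> * (potential {} + 1) * potential X"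
        using extinct_within_le_unexposed[OF assms(1,2) True, of N]
          extinct_unexposed_within_le[of S N "{}" X] unfolding \<epsilon>_def by linarith
    qed
    moreover have "\<epsilon> * (potential {} + 1) * potential X \<le> \<epsilon> * (potential {} + 1) * potential {}"
      using pot \<open>0 \<le> \<epsilon>\<close> by (intro mult_left_mono) auto
    ultimately show ?thesis unfolding eq \<epsilon>_def by linarith
  next
    case False
    then have eq: "extinct_unexposed S X X = 0"
      by (subst extinct_unexposed_exposed) simp
    have "extinct S \<delta> X \<le> \<epsilon> * potential X"
      using extinct_within_le_biased[OF assms(1,2) False] unfolding \<epsilon>_def
      by (intro LIMSEQ_le_const2[OF extinct_within_tendsto[OF assms(1)]]) blast
    also have "\<dots> \<le> \<epsilon> * (potential {} + 1) * potential {}"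
      using mult_left_mono[OF pot(2) \<open>0 \<le> \<epsilon>\<close>] \<open>0 \<le> \<epsilon>\<close> pot
      by (simp add: algebra_simps add_increasing2)
    finally show ?thesis using \<open>0 \<le> extinct S \<delta> X\<close> unfolding eq \<epsilon>_def by simp
  qed
qed

lemma fp_tendsto:
  "((\<lambda>\<delta>. fp V E (\<lambda>_. 1) S \<delta>) \<longlongrightarrow> 1 - (\<Sum>u\<in>V. extinct_unexposed S {u} {u}) / nV) at_top"
proof -
  define C where "C = nV * (potential {} + 1) * potential {}"
  let ?L = "1 - (\<Sum>u\<in>V. extinct_unexposed S {u} {u}) / nV"
  have "\<forall>\<^sub>F \<delta> in at_top. norm (fp V E (\<lambda>_. 1) S \<delta> - ?L) \<le> C / (1 + \<delta>)"
  proof (rule eventually_at_top_linorderI[of 0])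
    fix \<delta> :: real assume "0 \<le> \<delta>"
    have "fp V E (\<lambda>_. 1) S \<delta> - ?L = (\<Sum>u\<in>V. extinct_unexposed S {u} {u} - extinct S \<delta> {u}) / nV"
      using card_V_pos fp_set_eq_extinct[OF \<open>0 \<le> \<delta>\<close>]
      by (simp add: fp_def sum_subtractf diff_divide_distrib)
    also have "\<bar>\<dots>\<bar> \<le> (\<Sum>u\<in>V. \<bar>extinct_unexposed S {u} {u} - extinct S \<delta> {u}\<bar>) / nV"
      using card_V_pos by (simp add: divide_right_mono sum_abs)
    also have "\<dots> \<le> (\<Sum>u\<in>V. C / (1 + \<delta>)) / nV"
      using card_V_pos extinct_approx[OF \<open>0 \<le> \<delta>\<close>] unfolding C_def
      by (intro divide_right_mono sum_mono) (auto simp: abs_minus_commute)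
    also have "\<dots> = C / (1 + \<delta>)"
      using card_V_pos by simp
    finally show "norm (fp V E (\<lambda>_. 1) S \<delta> - ?L) \<le> C / (1 + \<delta>)" by simp
  qed
  moreover have "((\<lambda>\<delta>::real. C / (1 + \<delta>)) \<longlongrightarrow> 0) at_top"
    by (intro tendsto_divide_0[OF tendsto_const] filterlim_at_top_imp_at_infinity
        filterlim_tendsto_add_at_top[OF tendsto_const filterlim_ident])
  ultimately have "((\<lambda>\<delta>. fp V E (\<lambda>_. 1) S \<delta> - ?L) \<longlongrightarrow> 0) at_top"
    by (rule Lim_null_comparison)
  then show ?thesis by (rule LIM_zero_cancel)
qed

lemma fp_inf_eq: "fp_inf V E (\<lambda>_. 1) S = 1 - (\<Sum>u\<in>V. extinct_unexposed S {u} {u}) / nV"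
  unfolding fp_inf_def by (rule tendsto_Lim[OF trivial_limit_at_top_linorder fp_tendsto])

lemma fp_inf_submodular:
  "fp_inf V E (\<lambda>_. 1) (S1 \<union> S2) + fp_inf V E (\<lambda>_. 1) (S1 \<inter> S2)
    \<le> fp_inf V E (\<lambda>_. 1) S1 + fp_inf V E (\<lambda>_. 1) S2"
proof -
  have "(\<Sum>u\<in>V. extinct_unexposed S1 {u} {u}) + (\<Sum>u\<in>V. extinct_unexposed S2 {u} {u})
      \<le> (\<Sum>u\<in>V. extinct_unexposed (S1 \<union> S2) {u} {u}) + (\<Sum>u\<in>V. extinct_unexposed (S1 \<inter> S2) {u} {u})"
    unfolding sum.distrib[symmetric] by (intro sum_mono extinct_unexposed_supermodular)
  then have "((\<Sum>u\<in>V. extinct_unexposed S1 {u} {u}) + (\<Sum>u\<in>V. extinct_unexposed S2 {u} {u})) / nV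
      \<le> ((\<Sum>u\<in>V. extinct_unexposed (S1 \<union> S2) {u} {u}) + (\<Sum>u\<in>V. extinct_unexposed (S1 \<inter> S2) {u} {u})) / nV"
    using card_V_pos by (intro divide_right_mono) auto
  then show ?thesis unfolding fp_inf_eq add_divide_distrib by linarith
qed

end

theorem mainTheorem8:
  fixes V :: "'a set" and E :: "('a \<times> 'a) set"
  assumes "finite V" and "V \<noteq> {}"
    and "E \<subseteq> V \<times> V"
    and "sym E"
    and "\<forall>u\<in>V. (u, u) \<in> E"
    and "\<forall>u\<in>V. \<forall>v\<in>V. (u, v) \<in> E\<^sup>*"
  shows "submodular_on V (\<lambda>S. fp_inf V E (\<lambda>_. 1) S)"
proof -
  interpret connected_voter_graph V E
    using assms by unfold_locales
  show ?thesis
    unfolding submodular_on_def using fp_inf_submodular by blast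
qed

end
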